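(* For every integer $k\ge 4$, the order $TW_k$ has questionable-width at least $3k-8$.
   Context: For an integer $k\ge3$, $TW_k$ is the order on the elements $t_0,\dots,t_{k-1}$ together with one element $w_{a,b}$ for each pair of integers $0\le a$, $b\le k-1$ with $b\ge a+2$, whose order relation is: $t_j<t_l$ iff $j<l$; $t_j<w_{a,b}$ iff $j\le a$; $w_{a,b}<t_j$ iff $j\ge b$; $w_{a,b}<w_{c,d}$ iff $b\le c$; all other pairs are incomparable. For an ordinal $j$, $\mathcal O_j=(O_k)_{k<j}$ is a sequence of orders; a word of length $\ell\le j$ is $(x_k)_{k<\ell}$ with $x_k\in\mathrm{Dom}(O_k)$. The question of words $X,Y$ is $(k,x_k,y_k)$ for the least $k<\min(\mathrm{len}X,\mathrm{len}Y)$ with $x_k\ne y_k$, if it exists. For $i<j$, $\mathrm{Next}(i,j,\mathcal O_j)$ is the partial order on words of length $\ell$, $i\le\ell<j$, with $X<Y$ iff their question exists and $x_k<y_k$ in $O_k$; otherwise incomparable. A questionable representation of an order $O$ is an injective $f$ into some $\mathrm{Next}(i,j,\mathcal O_j)$ with $f(x)<f(y)\iff x<y$; its width is the supremum of the cardinalities of the $\mathrm{Dom}(O_k)$. The questionable-width of $O$ is the minimum width of a questionable representation of $O$. *)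

theory Defs
  imports Main "HOL-Library.Extended_Nat"
begin

type_synonym 'a ord = "'a set \<times> ('a \<Rightarrow> 'a \<Rightarrow> bool)"

definition is_order :: "'a ord \<Rightarrow> bool" where
  "is_order Q \<longleftrightarrow>
     (\<forall>x\<in>fst Q. \<not> snd Q x x) \<and>
     (\<forall>x\<in>fst Q. \<forall>y\<in>fst Q. \<forall>z\<in>fst Q. snd Q x y \<longrightarrow> snd Q y z \<longrightarrow> snd Q x z)"

datatype tw_elem = T nat | W nat nat

definition tw_dom :: "nat \<Rightarrow> tw_elem set" where
  "tw_dom k = {T j | j. j < k} \<union> {W a b | a b. b \<le> k - 1 \<and> a + 2 \<le> b}"

fun tw_less :: "tw_elem \<Rightarrow> tw_elem \<Rightarrow> bool" where
  "tw_less (T j) (T l) \<longleftrightarrow> j < l"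
| "tw_less (T j) (W a b) \<longleftrightarrow> j \<le> a"
| "tw_less (W a b) (T j) \<longleftrightarrow> b \<le> j"
| "tw_less (W a b) (W c d) \<longleftrightarrow> b \<le> c"

definition TW :: "nat \<Rightarrow> tw_elem ord" where
  "TW k = (tw_dom k, tw_less)"

text \<open>The ordinal j is represented by a well-ordered index type 'i (the set of
ordinals below j is the whole type). A word of length l is a pair (l, x) where x k is in the
domain of Os k for k < l and x k = undefined for k \<ge> l (normal form).\<close>

definition word :: "('i::wellorder \<Rightarrow> 'a ord) \<Rightarrow> 'i \<times> ('i \<Rightarrow> 'a) \<Rightarrow> bool" where
  "word Os X \<longleftrightarrow> (\<forall>k < fst X. snd X k \<in> fst (Os k)) \<and> (\<forall>k. fst X \<le> k \<longrightarrow> snd X k = undefined)"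

definition next_dom :: "'i::wellorder \<Rightarrow> ('i \<Rightarrow> 'a ord) \<Rightarrow> ('i \<times> ('i \<Rightarrow> 'a)) set" where
  "next_dom i Os = {X. word Os X \<and> i \<le> fst X}"

definition question_exists :: "'i::wellorder \<times> ('i \<Rightarrow> 'a) \<Rightarrow> 'i \<times> ('i \<Rightarrow> 'a) \<Rightarrow> bool" where
  "question_exists X Y \<longleftrightarrow> (\<exists>k. k < min (fst X) (fst Y) \<and> snd X k \<noteq> snd Y k)"

definition question_idx :: "'i::wellorder \<times> ('i \<Rightarrow> 'a) \<Rightarrow> 'i \<times> ('i \<Rightarrow> 'a) \<Rightarrow> 'i" where
  "question_idx X Y = (LEAST k. k < min (fst X) (fst Y) \<and> snd X k \<noteq> snd Y k)"

definition next_less :: "('i::wellorder \<Rightarrow> 'a ord) \<Rightarrow> 'i \<times> ('i \<Rightarrow> 'a) \<Rightarrow> 'i \<times> ('i \<Rightarrow> 'a) \<Rightarrow> bool" where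
  "next_less Os X Y \<longleftrightarrow> question_exists X Y \<and>
     snd (Os (question_idx X Y)) (snd X (question_idx X Y)) (snd Y (question_idx X Y))"

definition questionable_rep ::
  "'b ord \<Rightarrow> 'i::wellorder \<Rightarrow> ('i \<Rightarrow> 'a ord) \<Rightarrow> ('b \<Rightarrow> 'i \<times> ('i \<Rightarrow> 'a)) \<Rightarrow> bool" where
  "questionable_rep P i Os f \<longleftrightarrow>
     (\<forall>k. is_order (Os k)) \<and>
     f ` fst P \<subseteq> next_dom i Os \<and>
     inj_on f (fst P) \<and>
     (\<forall>x\<in>fst P. \<forall>y\<in>fst P. next_less Os (f x) (f y) \<longleftrightarrow> snd P x y)"

text \<open>Width: supremum of the cardinalities of the domains, with every infinite
cardinality collapsed to \<infinity> (enough to compare with finite bounds).\<close>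
definition card_e :: "'a set \<Rightarrow> enat" where
  "card_e A = (if finite A then enat (card A) else \<infinity>)"

definition qwidth :: "('i \<Rightarrow> 'a ord) \<Rightarrow> enat" where
  "qwidth Os = (SUP k. card_e (fst (Os k)))"

end

theory Submission
  imports Defs
begin

text \<open>Let f represent TW k and let q be the least question between two of the words
  f (T 1), ..., f (T (k-2)); these words agree below q. An element that is comparable with one
  T c of this chain but incomparable with another also agrees with them below q (otherwise it
  would be compared alike with all of them), so among such elements the order is read off from
  the letters at position q in the order O_q. Since the chain words cannot all have the same
  letter at q, the witnesses W m (m+3) and W (m-1) (m+2) force the chain letters to increase
  strictly. The elements W (j-1) (j+1) and W (j-1) (j+2) have letters outside the chain, and
  a letter outside the chain determines its W element through its comparisons with the chain.
  So the k-2 chain elements and these 2k-6 elements carry 3k-8 distinct letters in O_q.\<close>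

lemma question_idxD:
  assumes "question_exists X Y"
  shows "question_idx X Y < fst X" "question_idx X Y < fst Y"
    "snd X (question_idx X Y) \<noteq> snd Y (question_idx X Y)"
    "m < question_idx X Y \<Longrightarrow> snd X m = snd Y m"
proof -
  let ?P = "\<lambda>k. k < min (fst X) (fst Y) \<and> snd X k \<noteq> snd Y k"
  have P: "?P (question_idx X Y)"
    unfolding question_idx_def by (rule LeastI_ex) (use assms in \<open>simp add: question_exists_def\<close>)
  then show "question_idx X Y < fst X" "question_idx X Y < fst Y"
    "snd X (question_idx X Y) \<noteq> snd Y (question_idx X Y)" by auto
  assume "m < question_idx X Y"
  with P not_less_Least[of m ?P] show "snd X m = snd Y m"
    unfolding question_idx_def by auto
qed

lemma question_idx_eqI:
  assumes "r < fst X" "r < fst Y" "\<And>m. m < r \<Longrightarrow> snd X m = snd Y m" "snd X r \<noteq> snd Y r"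
  shows "question_exists X Y" "question_idx X Y = r"
proof -
  show "question_exists X Y" unfolding question_exists_def using assms by auto
  show "question_idx X Y = r" unfolding question_idx_def
  proof (rule Least_equality)
    fix y assume "y < min (fst X) (fst Y) \<and> snd X y \<noteq> snd Y y"
    then show "r \<le> y" using assms(3) by (meson not_le)
  qed (use assms in auto)
qed

lemma next_less_first_difference:
  assumes "r < fst X" "r < fst Y" "\<And>m. m < r \<Longrightarrow> snd X m = snd Y m" "snd X r \<noteq> snd Y r"
  shows "next_less Os X Y \<longleftrightarrow> snd (Os r) (snd X r) (snd Y r)"
  using question_idx_eqI[OF assms] unfolding next_less_def by simp

lemma question_exists_commute: "question_exists Y X \<longleftrightarrow> question_exists X Y"
  unfolding question_exists_def by (metis min.commute)

lemma next_less_cong_prefix: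
  assumes q: "question_exists X Y" and len: "question_idx X Y < fst Z"
    and agree: "\<And>m. m \<le> question_idx X Y \<Longrightarrow> snd Z m = snd Y m"
  shows "next_less Os X Z \<longleftrightarrow> next_less Os X Y" "next_less Os Z X \<longleftrightarrow> next_less Os Y X"
proof -
  let ?r = "question_idx X Y"
  note d = question_idxD[OF q]
  have XZ: "next_less Os X Z \<longleftrightarrow> snd (Os ?r) (snd X ?r) (snd Z ?r)"
    by (rule next_less_first_difference) (use d len agree in auto)
  have ZX: "next_less Os Z X \<longleftrightarrow> snd (Os ?r) (snd Z ?r) (snd X ?r)"
    by (rule next_less_first_difference) (use d len agree in \<open>auto simp: eq_commute\<close>)
  have XY: "next_less Os X Y \<longleftrightarrow> snd (Os ?r) (snd X ?r) (snd Y ?r)"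
    by (rule next_less_first_difference) (use d in auto)
  have YX: "next_less Os Y X \<longleftrightarrow> snd (Os ?r) (snd Y ?r) (snd X ?r)"
    by (rule next_less_first_difference) (use d in \<open>auto simp: eq_commute\<close>)
  show "next_less Os X Z \<longleftrightarrow> next_less Os X Y" "next_less Os Z X \<longleftrightarrow> next_less Os Y X"
    using XZ ZX XY YX agree[of ?r] by simp_all
qed

lemma nat_interval_propagate:
  assumes "P m" "lo \<le> m" "m \<le> hi" "lo \<le> n" "n \<le> hi"
    and up: "\<And>j. lo \<le> j \<Longrightarrow> j < hi \<Longrightarrow> P j \<Longrightarrow> P (Suc j)"
    and down: "\<And>j. lo \<le> j \<Longrightarrow> j < hi \<Longrightarrow> P (Suc j) \<Longrightarrow> P j"
  shows "P n"
proof (cases "m \<le> n")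
  case True
  then show ?thesis
  proof (induction n rule: dec_induct)
    case (step j)
    then show ?case using up[of j] assms(2,5) by simp
  qed (fact assms(1))
next
  case False
  then have "n \<le> m" by simp
  then show ?thesis
  proof (induction n rule: inc_induct)
    case (step j)
    then show ?case using down[of j] assms(3,4) by simp
  qed (fact assms(1))
qed

lemma enat_card_le_card_e:
  assumes "inj_on g A" "finite A" "g ` A \<subseteq> B"
  shows "enat (card A) \<le> card_e B"
proof (cases "finite B")
  case True
  then have "card (g ` A) \<le> card B" using assms(3) by (rule card_mono)
  then show ?thesis using True card_image[OF assms(1)] by (simp add: card_e_def)
qed (simp add: card_e_def)

lemma card_e_le_qwidth: "card_e (fst (Os m)) \<le> qwidth Os"
  unfolding qwidth_def by (rule SUP_upper) simp

lemma T_in_tw_dom: "j < k \<Longrightarrow> T j \<in> tw_dom k"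
  by (auto simp: tw_dom_def)

lemma W_in_tw_dom: "b \<le> k - 1 \<Longrightarrow> a + 2 \<le> b \<Longrightarrow> W a b \<in> tw_dom k"
  by (auto simp: tw_dom_def)

lemma W_in_tw_domD: "W a b \<in> tw_dom k \<Longrightarrow> a + 2 \<le> b \<and> b \<le> k - 1"
  by (auto simp: tw_dom_def)

lemma W_eq_if_same_chain_comparisons:
  assumes dom: "W a b \<in> tw_dom k" "W a' b' \<in> tw_dom k"
    and below: "\<And>c. 1 \<le> c \<Longrightarrow> c \<le> k - 2 \<Longrightarrow> tw_less (T c) (W a b) \<longleftrightarrow> tw_less (T c) (W a' b')"
    and above: "\<And>c. 1 \<le> c \<Longrightarrow> c \<le> k - 2 \<Longrightarrow> tw_less (W a b) (T c) \<longleftrightarrow> tw_less (W a' b') (T c)"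
  shows "W a b = W a' b'"
proof -
  have "a + 2 \<le> b" "b \<le> k - 1" "a' + 2 \<le> b'" "b' \<le> k - 1"
    using W_in_tw_domD[OF dom(1)] W_in_tw_domD[OF dom(2)] by auto
  then have bounds: "a \<le> k - 2" "a' \<le> k - 2" "2 \<le> b" "2 \<le> b'" by auto
  have "a = a'"
  proof (cases a a' rule: linorder_cases)
    case less
    then show ?thesis using below[of a'] bounds by simp
  next
    case greater
    then show ?thesis using below[of a] bounds by simp
  qed
  moreover have "b = b'"
  proof (cases b b' rule: linorder_cases)
    case less
    then have "b \<le> k - 2" using \<open>b' \<le> k - 1\<close> by linarith
    then show ?thesis using above[of b] bounds less by simp
  next
    case greater
    then have "b' \<le> k - 2" using \<open>b \<le> k - 1\<close> by linarith
    then show ?thesis using above[of b'] bounds greater by simp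
  qed
  ultimately show ?thesis by simp
qed

definition tw_W_witnesses :: "nat \<Rightarrow> tw_elem set" where
  "tw_W_witnesses k = (\<lambda>j. W (j - 1) (j + 1)) ` {1..k - 2} \<union> (\<lambda>j. W (j - 1) (j + 2)) ` {1..k - 4}"

lemma card_tw_witnesses:
  assumes "k \<ge> 4"
  shows "card (T ` {1..k - 2} \<union> tw_W_witnesses k) = 3 * k - 8"
proof -
  let ?S0 = "T ` {1..k - 2}"
  let ?S1 = "(\<lambda>j. W (j - 1) (j + 1)) ` {1..k - 2}"
  let ?S2 = "(\<lambda>j. W (j - 1) (j + 2)) ` {1..k - 4}"
  have "card ?S0 = k - 2" "card ?S1 = k - 2" "card ?S2 = k - 4"
    by (subst card_image; auto simp: inj_on_def)+
  moreover have "?S0 \<inter> (?S1 \<union> ?S2) = {}" "?S1 \<inter> ?S2 = {}" by auto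
  ultimately have "card (?S0 \<union> (?S1 \<union> ?S2)) = (k - 2) + (k - 2) + (k - 4)"
    by (simp add: card_Un_disjoint)
  then show ?thesis using assms by (simp add: tw_W_witnesses_def)
qed

locale tw_representation =
  fixes k :: nat and i :: "'i::wellorder" and Os :: "'i \<Rightarrow> 'a ord"
    and f :: "tw_elem \<Rightarrow> 'i \<times> ('i \<Rightarrow> 'a)"
  assumes k_ge_4: "k \<ge> 4" and rep: "questionable_rep (TW k) i Os f"
begin

lemma next_less_iff_tw_less:
  "x \<in> tw_dom k \<Longrightarrow> y \<in> tw_dom k \<Longrightarrow> next_less Os (f x) (f y) \<longleftrightarrow> tw_less x y"
  using rep unfolding questionable_rep_def TW_def by auto

lemma is_order_Os: "is_order (Os m)"
  using rep unfolding questionable_rep_def by auto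

lemma letter_in_Os: "x \<in> tw_dom k \<Longrightarrow> m < fst (f x) \<Longrightarrow> snd (f x) m \<in> fst (Os m)"
  using rep unfolding questionable_rep_def TW_def next_dom_def word_def by auto

lemma chain_in_tw_dom: "c \<le> k - 2 \<Longrightarrow> T c \<in> tw_dom k"
  using k_ge_4 by (intro T_in_tw_dom) simp

lemma chain_question_exists:
  "1 \<le> a \<Longrightarrow> a < b \<Longrightarrow> b \<le> k - 2 \<Longrightarrow> question_exists (f (T a)) (f (T b))"
  using next_less_iff_tw_less[of "T a" "T b"] chain_in_tw_dom[of a] chain_in_tw_dom[of b]
  unfolding next_less_def by simp

definition chain_questions :: "'i set" where
  "chain_questions = (\<lambda>(a, b). question_idx (f (T a)) (f (T b))) `
     {(a, b). 1 \<le> a \<and> a < b \<and> b \<le> k - 2}"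

definition q :: 'i where
  "q = Min chain_questions"

lemma finite_chain_questions: "finite chain_questions"
proof -
  have "{(a, b). 1 \<le> a \<and> a < b \<and> b \<le> k - 2} \<subseteq> {..k} \<times> {..k}" by auto
  then have "finite {(a, b). 1 \<le> a \<and> a < b \<and> b \<le> k - 2}" by (rule finite_subset) auto
  then show ?thesis unfolding chain_questions_def by simp
qed

lemma q_le_chain_question:
  "1 \<le> a \<Longrightarrow> a < b \<Longrightarrow> b \<le> k - 2 \<Longrightarrow> q \<le> question_idx (f (T a)) (f (T b))"
  unfolding q_def using finite_chain_questions by (intro Min_le) (auto simp: chain_questions_def)

lemma q_attained:
  obtains a b where "1 \<le> a" "a < b" "b \<le> k - 2" "q = question_idx (f (T a)) (f (T b))"
proof -
  have "(1, 2) \<in> {(a, b). 1 \<le> a \<and> a < b \<and> b \<le> k - 2}" using k_ge_4 by auto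
  then have "chain_questions \<noteq> {}" unfolding chain_questions_def by blast
  then have "q \<in> chain_questions" unfolding q_def using finite_chain_questions by (intro Min_in)
  then show ?thesis using that unfolding chain_questions_def by auto
qed

definition on_trunk :: "tw_elem \<Rightarrow> bool" where
  "on_trunk e \<longleftrightarrow> q < fst (f e) \<and> (\<forall>m<q. snd (f e) m = snd (f (T 1)) m)"

definition letter :: "tw_elem \<Rightarrow> 'a" where
  "letter e = snd (f e) q"

abbreviation chain_letter :: "nat \<Rightarrow> 'a" where
  "chain_letter c \<equiv> letter (T c)"

abbreviation letter_less :: "'a \<Rightarrow> 'a \<Rightarrow> bool" where
  "letter_less \<equiv> snd (Os q)"

lemma chain_on_trunk:
  assumes "1 \<le> c" "c \<le> k - 2"
  shows "on_trunk (T c)"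
proof -
  obtain b where b: "1 < b" "b \<le> k - 2" "c = 1 \<or> c = b"
  proof (cases "c = 1")
    case True
    then show ?thesis using that[of 2] k_ge_4 by simp
  qed (use assms that in simp)
  note d = question_idxD[OF chain_question_exists[of 1 b]]
  have "q \<le> question_idx (f (T 1)) (f (T b))" using b by (intro q_le_chain_question) auto
  then show ?thesis
    using b d unfolding on_trunk_def by (auto intro: le_less_trans less_le_trans)
qed

lemma letter_in_Os_q: "e \<in> tw_dom k \<Longrightarrow> on_trunk e \<Longrightarrow> letter e \<in> fst (Os q)"
  unfolding on_trunk_def letter_def using letter_in_Os by auto

lemma tw_less_iff_letter_less:
  assumes "x \<in> tw_dom k" "y \<in> tw_dom k" "on_trunk x" "on_trunk y" "letter x \<noteq> letter y"
  shows "tw_less x y \<longleftrightarrow> letter_less (letter x) (letter y)"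
proof -
  have "next_less Os (f x) (f y) \<longleftrightarrow> letter_less (letter x) (letter y)"
    unfolding letter_def by (rule next_less_first_difference)
      (use assms(3-5) in \<open>auto simp: on_trunk_def letter_def\<close>)
  then show ?thesis using next_less_iff_tw_less[OF assms(1,2)] by simp
qed

lemma letter_less_irrefl: "z \<in> fst (Os q) \<Longrightarrow> \<not> letter_less z z"
  using is_order_Os[of q] unfolding is_order_def by auto

lemma letter_less_trans:
  "x \<in> fst (Os q) \<Longrightarrow> y \<in> fst (Os q) \<Longrightarrow> z \<in> fst (Os q) \<Longrightarrow>
    letter_less x y \<Longrightarrow> letter_less y z \<Longrightarrow> letter_less x z"
  using is_order_Os[of q] unfolding is_order_def by blast

text \<open>If the first difference of f e with a chain word came before q, then e would be
  compared with all chain words alike, since these agree up to q.\<close>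
lemma on_trunk_if_separates_chain:
  assumes e: "e \<in> tw_dom k"
    and c: "1 \<le> c" "c \<le> k - 2" "tw_less e (T c) \<or> tw_less (T c) e"
    and d: "1 \<le> d" "d \<le> k - 2" "\<not> tw_less e (T d)" "\<not> tw_less (T d) e"
  shows "on_trunk e"
proof -
  have Tc: "T c \<in> tw_dom k" "on_trunk (T c)" using c chain_in_tw_dom chain_on_trunk by auto
  have Td: "T d \<in> tw_dom k" "on_trunk (T d)" using d chain_in_tw_dom chain_on_trunk by auto
  have qe: "question_exists (f e) (f (T c))"
    using c(3) next_less_iff_tw_less[OF e Tc(1)] next_less_iff_tw_less[OF Tc(1) e]
      question_exists_commute unfolding next_less_def by blast
  define r where "r = question_idx (f e) (f (T c))"
  note d_ec = question_idxD[OF qe, folded r_def]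
  show ?thesis
  proof (cases "q \<le> r")
    case True
    then show ?thesis
      using d_ec Tc(2) unfolding on_trunk_def by (auto intro: less_le_trans)
  next
    case False
    have "r < fst (f (T d))" "\<And>m. m \<le> r \<Longrightarrow> snd (f (T d)) m = snd (f (T c)) m"
      using False Tc(2) Td(2) unfolding on_trunk_def by auto
    from next_less_cong_prefix[OF qe, folded r_def, OF this]
    show ?thesis
      using c(3) d(3,4) next_less_iff_tw_less[OF e Tc(1)] next_less_iff_tw_less[OF Tc(1) e]
        next_less_iff_tw_less[OF e Td(1)] next_less_iff_tw_less[OF Td(1) e] by blast
  qed
qed

lemma chain_letter_in_Os_q: "1 \<le> c \<Longrightarrow> c \<le> k - 2 \<Longrightarrow> chain_letter c \<in> fst (Os q)"
  using letter_in_Os_q chain_in_tw_dom chain_on_trunk by simp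

lemma tw_less_chain_iff:
  assumes e: "e \<in> tw_dom k" "on_trunk e" and c: "1 \<le> c" "c \<le> k - 2"
    and ne: "letter e \<noteq> chain_letter c"
  shows "tw_less e (T c) \<longleftrightarrow> letter_less (letter e) (chain_letter c)"
    and "tw_less (T c) e \<longleftrightarrow> letter_less (chain_letter c) (letter e)"
  using tw_less_iff_letter_less[OF e(1) chain_in_tw_dom e(2) chain_on_trunk]
    tw_less_iff_letter_less[OF chain_in_tw_dom e(1) chain_on_trunk e(2)] c ne by auto

lemma chain_letter_mono:
  assumes "1 \<le> a" "a < b" "b \<le> k - 2"
  shows "chain_letter a = chain_letter b \<or> letter_less (chain_letter a) (chain_letter b)"
  using tw_less_chain_iff(2)[OF chain_in_tw_dom[of b] chain_on_trunk[of b], of a] assms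
  by (cases "chain_letter a = chain_letter b") auto

text \<open>The witness W m (m+3) is above T m and incomparable with T (m+1) and T (m+2).\<close>
lemma chain_letter_eq_propagates_up:
  assumes m: "1 \<le> m" "m + 2 \<le> k - 2" and eq: "chain_letter m = chain_letter (m + 1)"
  shows "chain_letter (m + 1) = chain_letter (m + 2)"
proof (rule ccontr)
  assume ne: "chain_letter (m + 1) \<noteq> chain_letter (m + 2)"
  let ?w = "W m (m + 3)"
  have w: "?w \<in> tw_dom k" "on_trunk ?w"
    using m by (auto intro!: W_in_tw_dom on_trunk_if_separates_chain[of _ m "m + 1"])
  have less: "letter_less (chain_letter (m + 1)) (chain_letter (m + 2))"
    using chain_letter_mono[of "m + 1" "m + 2"] ne m by auto
  show False
  proof (cases "letter ?w = chain_letter m")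
    case True
    then show False using tw_less_chain_iff(1)[OF w, of "m + 2"] m eq ne less by simp
  next
    case False
    then show False
      using tw_less_chain_iff(2)[OF w, of m] tw_less_chain_iff(2)[OF w, of "m + 1"] m eq by simp
  qed
qed

text \<open>Symmetrically, W (m-1) (m+2) is below T (m+2) and incomparable with T m and T (m+1).\<close>
lemma chain_letter_eq_propagates_down:
  assumes m: "1 \<le> m" "m + 2 \<le> k - 2" and eq: "chain_letter (m + 1) = chain_letter (m + 2)"
  shows "chain_letter m = chain_letter (m + 1)"
proof (rule ccontr)
  assume ne: "chain_letter m \<noteq> chain_letter (m + 1)"
  let ?w = "W (m - 1) (m + 2)"
  have w: "?w \<in> tw_dom k" "on_trunk ?w"
    using m by (auto intro!: W_in_tw_dom on_trunk_if_separates_chain[of _ "m + 2" m])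
  have less: "letter_less (chain_letter m) (chain_letter (m + 1))"
    using chain_letter_mono[of m "m + 1"] ne m by auto
  show False
  proof (cases "letter ?w = chain_letter (m + 2)")
    case True
    then show False using tw_less_chain_iff(2)[OF w, of m] m eq ne less by simp
  next
    case False
    then show False
      using tw_less_chain_iff(1)[OF w, of "m + 2"] tw_less_chain_iff(1)[OF w, of "m + 1"] m eq
      by simp
  qed
qed

text \<open>Otherwise all chain letters would coincide, contradicting that q is a first difference
  of two chain words.\<close>
lemma chain_letter_Suc_neq:
  assumes m: "1 \<le> m" "m + 1 \<le> k - 2"
  shows "chain_letter m \<noteq> chain_letter (Suc m)"
proof
  assume eq: "chain_letter m = chain_letter (Suc m)"
  have adjacent_eq: "chain_letter j = chain_letter (Suc j)" if "1 \<le> j" "j \<le> k - 3" for j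
  proof (rule nat_interval_propagate[where P = "\<lambda>j. chain_letter j = chain_letter (Suc j)"
        and lo = 1 and hi = "k - 3" and m = m])
    show "chain_letter (Suc j) = chain_letter (Suc (Suc j))"
      if "1 \<le> j" "j < k - 3" "chain_letter j = chain_letter (Suc j)" for j
      using chain_letter_eq_propagates_up[of j] that by simp
    show "chain_letter j = chain_letter (Suc j)"
      if "1 \<le> j" "j < k - 3" "chain_letter (Suc j) = chain_letter (Suc (Suc j))" for j
      using chain_letter_eq_propagates_down[of j] that by simp
  qed (use eq m that in auto)
  obtain a b where ab: "1 \<le> a" "a < b" "b \<le> k - 2" "q = question_idx (f (T a)) (f (T b))"
    by (rule q_attained)
  have "chain_letter a = chain_letter b'" if "a \<le> b'" "b' \<le> b" for b'
    using that
  proof (induction b' rule: dec_induct)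
    case (step j)
    then show ?case using adjacent_eq[of j] ab by simp
  qed simp
  moreover have "chain_letter a \<noteq> chain_letter b"
    using question_idxD(3)[OF chain_question_exists[OF ab(1-3)]] ab(4) by (simp add: letter_def)
  ultimately show False using ab by simp
qed

lemma chain_letter_less:
  assumes "1 \<le> a" "a < b" "b \<le> k - 2"
  shows "letter_less (chain_letter a) (chain_letter b)"
  using Suc_leI[OF assms(2)] assms(3)
proof (induction b rule: dec_induct)
  case base
  then show ?case using chain_letter_mono[of a "Suc a"] chain_letter_Suc_neq[of a] assms(1) by simp
next
  case (step j)
  have "letter_less (chain_letter j) (chain_letter (Suc j))"
    using chain_letter_mono[of j "Suc j"] chain_letter_Suc_neq[of j] step assms(1) by simp
  then show ?case
    using letter_less_trans[OF chain_letter_in_Os_q chain_letter_in_Os_q chain_letter_in_Os_q,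
        of a j "Suc j"] step assms(1) by simp
qed

lemma chain_letter_inj:
  assumes "1 \<le> a" "a \<le> k - 2" "1 \<le> b" "b \<le> k - 2" "a \<noteq> b"
  shows "chain_letter a \<noteq> chain_letter b"
  using assms chain_letter_less[of a b] chain_letter_less[of b a]
    letter_less_irrefl[OF chain_letter_in_Os_q[of a]] by (cases "a < b") auto

lemma letter_ne_chain_letter_if_incomparable:
  assumes e: "e \<in> tw_dom k" "on_trunk e"
    and c: "1 \<le> c" "c \<le> k - 2" and d: "1 \<le> d" "d \<le> k - 2" "c \<noteq> d"
    and incomp: "\<not> tw_less e (T d)" "\<not> tw_less (T d) e"
  shows "letter e \<noteq> chain_letter c"
proof
  assume eq: "letter e = chain_letter c"
  then have "letter e \<noteq> chain_letter d" using chain_letter_inj c d by simp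
  then show False
    using tw_less_chain_iff[OF e d(1,2)] incomp eq chain_letter_less[of c d]
      chain_letter_less[of d c] c d by (cases "c < d") auto
qed

lemma on_trunk_short_W:
  assumes "1 \<le> j" "j \<le> k - 2"
  shows "W (j - 1) (j + 1) \<in> tw_dom k" "on_trunk (W (j - 1) (j + 1))"
proof -
  show w: "W (j - 1) (j + 1) \<in> tw_dom k" using assms by (intro W_in_tw_dom) auto
  show "on_trunk (W (j - 1) (j + 1))"
  proof (cases "j + 1 \<le> k - 2")
    case True
    then show ?thesis using on_trunk_if_separates_chain[OF w, of "j + 1" j] assms by simp
  next
    case False
    then show ?thesis using on_trunk_if_separates_chain[OF w, of "j - 1" j] assms k_ge_4 by simp
  qed
qed

lemma on_trunk_long_W:
  assumes "1 \<le> j" "j + 2 \<le> k - 2"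
  shows "W (j - 1) (j + 2) \<in> tw_dom k" "on_trunk (W (j - 1) (j + 2))"
proof -
  show w: "W (j - 1) (j + 2) \<in> tw_dom k" using assms by (intro W_in_tw_dom) auto
  show "on_trunk (W (j - 1) (j + 2))"
    using on_trunk_if_separates_chain[OF w, of "j + 2" j] assms by simp
qed

text \<open>For c = j, compare with the neighbouring short witness W j (j+2) (or W (j-2) j at the
  end of the chain): it lies on the other side of T j but is incomparable with W (j-1) (j+1).\<close>
lemma letter_short_W_ne_chain_letter:
  assumes j: "1 \<le> j" "j \<le> k - 2" and c: "1 \<le> c" "c \<le> k - 2"
  shows "letter (W (j - 1) (j + 1)) \<noteq> chain_letter c"
proof
  let ?w = "W (j - 1) (j + 1)"
  assume eq: "letter ?w = chain_letter c"
  note w = on_trunk_short_W[OF j]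
  show False
  proof (cases "c = j")
    case False
    then show False
      using letter_ne_chain_letter_if_incomparable[OF w c, of j] j eq by simp
  next
    case True
    show False
    proof (cases "j + 1 \<le> k - 2")
      case True
      let ?v = "W j (j + 2)"
      have v: "?v \<in> tw_dom k" "on_trunk ?v" using on_trunk_short_W[of "j + 1"] True by auto
      have ne: "letter ?v \<noteq> chain_letter j"
        using letter_ne_chain_letter_if_incomparable[OF v j, of "j + 1"] True by simp
      have "letter_less (letter ?w) (letter ?v)"
        using tw_less_chain_iff(2)[OF v j ne] eq \<open>c = j\<close> by simp
      then show False
        using tw_less_iff_letter_less[OF w(1) v(1) w(2) v(2)] ne eq \<open>c = j\<close> by simp
    next
      case False
      then have j2: "2 \<le> j" using j k_ge_4 by simp
      let ?v = "W (j - 2) j"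
      have "W (j - 1 - 1) (j - 1 + 1) \<in> tw_dom k" "on_trunk (W (j - 1 - 1) (j - 1 + 1))"
        using on_trunk_short_W[of "j - 1"] j j2 by auto
      moreover have "j - 1 - 1 = j - 2" "j - 1 + 1 = j" using j2 by auto
      ultimately have v: "?v \<in> tw_dom k" "on_trunk ?v" by simp_all
      have "j - 1 \<le> k - 2" "\<not> j \<le> j - 1" "\<not> j - 1 \<le> j - 2" using j j2 by auto
      then have ne: "letter ?v \<noteq> chain_letter j"
        using letter_ne_chain_letter_if_incomparable[OF v j, of "j - 1"] j2 by simp
      have "letter_less (letter ?v) (letter ?w)"
        using tw_less_chain_iff(1)[OF v j ne] eq \<open>c = j\<close> by simp
      then show False
        using tw_less_iff_letter_less[OF v(1) w(1) v(2) w(2)] ne eq \<open>c = j\<close> j2 by simp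
    qed
  qed
qed

lemma letter_long_W_ne_chain_letter:
  assumes j: "1 \<le> j" "j + 2 \<le> k - 2" and c: "1 \<le> c" "c \<le> k - 2"
  shows "letter (W (j - 1) (j + 2)) \<noteq> chain_letter c"
proof -
  define d where "d = (if c = j then j + 1 else j)"
  have "1 \<le> d" "d \<le> k - 2" "c \<noteq> d" "j \<le> d" "d \<le> j + 1" using j unfolding d_def by auto
  then show ?thesis
    using letter_ne_chain_letter_if_incomparable[OF on_trunk_long_W[OF j] c, of d] j by simp
qed

definition off_chain :: "tw_elem \<Rightarrow> bool" where
  "off_chain e \<longleftrightarrow> e \<in> tw_dom k \<and> on_trunk e \<and>
     (\<forall>c. 1 \<le> c \<longrightarrow> c \<le> k - 2 \<longrightarrow> letter e \<noteq> chain_letter c)"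

lemma off_chain_W_witness:
  assumes "e \<in> tw_W_witnesses k"
  shows "off_chain e"
proof -
  consider (short) j where "1 \<le> j" "j \<le> k - 2" "e = W (j - 1) (j + 1)"
    | (long) j where "1 \<le> j" "j + 2 \<le> k - 2" "e = W (j - 1) (j + 2)"
    using assms k_ge_4 unfolding tw_W_witnesses_def by force
  then show ?thesis
  proof cases
    case short
    then show ?thesis
      using on_trunk_short_W[OF short(1,2)] letter_short_W_ne_chain_letter[OF short(1,2)]
      unfolding off_chain_def by simp
  next
    case long
    then show ?thesis
      using on_trunk_long_W[OF long(1,2)] letter_long_W_ne_chain_letter[OF long(1,2)]
      unfolding off_chain_def by simp
  qed
qed

lemma off_chain_letter_inj:
  assumes off: "off_chain (W a b)" "off_chain (W a' b')"
    and eq: "letter (W a b) = letter (W a' b')"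
  shows "W a b = W a' b'"
proof (rule W_eq_if_same_chain_comparisons)
  show dom: "W a b \<in> tw_dom k" "W a' b' \<in> tw_dom k" using off by (simp_all add: off_chain_def)
  have trunk: "on_trunk (W a b)" "on_trunk (W a' b')" using off by (simp_all add: off_chain_def)
  fix c assume c: "1 \<le> c" "c \<le> k - 2"
  then have ne: "letter (W a b) \<noteq> chain_letter c" "letter (W a' b') \<noteq> chain_letter c"
    using off by (simp_all add: off_chain_def)
  show "tw_less (T c) (W a b) \<longleftrightarrow> tw_less (T c) (W a' b')"
    using tw_less_chain_iff(2)[OF dom(1) trunk(1) c ne(1)]
      tw_less_chain_iff(2)[OF dom(2) trunk(2) c ne(2)] eq by simp
  show "tw_less (W a b) (T c) \<longleftrightarrow> tw_less (W a' b') (T c)"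
    using tw_less_chain_iff(1)[OF dom(1) trunk(1) c ne(1)]
      tw_less_chain_iff(1)[OF dom(2) trunk(2) c ne(2)] eq by simp
qed

lemma inj_on_letter_tw_witnesses: "inj_on letter (T ` {1..k - 2} \<union> tw_W_witnesses k)"
proof -
  have "inj_on (letter \<circ> T) {1..k - 2}"
  proof (rule inj_onI)
    fix a b assume "a \<in> {1..k - 2}" "b \<in> {1..k - 2}" "(letter \<circ> T) a = (letter \<circ> T) b"
    then show "a = b" using chain_letter_inj[of a b] by auto
  qed
  then have "inj_on letter (T ` {1..k - 2})" by (rule inj_on_imageI)
  moreover have "inj_on letter (tw_W_witnesses k)"
  proof (rule inj_onI)
    fix u v assume uv: "u \<in> tw_W_witnesses k" "v \<in> tw_W_witnesses k" "letter u = letter v"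
    obtain a b a' b' where W: "u = W a b" "v = W a' b'"
      using uv(1,2) by (auto simp: tw_W_witnesses_def)
    show "u = v"
      using off_chain_letter_inj[of a b a' b'] off_chain_W_witness[OF uv(1)]
        off_chain_W_witness[OF uv(2)] uv(3) unfolding W by simp
  qed
  moreover have "letter ` T ` {1..k - 2} \<inter> letter ` tw_W_witnesses k = {}"
    using off_chain_W_witness unfolding off_chain_def by fastforce
  ultimately show ?thesis by (auto simp: inj_on_Un)
qed

lemma letter_tw_witnesses_subset: "letter ` (T ` {1..k - 2} \<union> tw_W_witnesses k) \<subseteq> fst (Os q)"
  using chain_letter_in_Os_q off_chain_W_witness letter_in_Os_q unfolding off_chain_def by auto

end

theorem lemma7p3:
  fixes k :: nat and i :: "'i::wellorder" and Os :: "'i \<Rightarrow> 'a ord"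
    and f :: "tw_elem \<Rightarrow> 'i \<times> ('i \<Rightarrow> 'a)"
  assumes "k \<ge> 4"
    and "questionable_rep (TW k) i Os f"
  shows "qwidth Os \<ge> enat (3 * k - 8)"
proof -
  interpret tw_representation k i Os f using assms by unfold_locales
  have "enat (3 * k - 8) \<le> card_e (fst (Os q))"
    using enat_card_le_card_e[OF inj_on_letter_tw_witnesses _ letter_tw_witnesses_subset]
      card_tw_witnesses[OF assms(1)] by (simp add: tw_W_witnesses_def)
  also have "\<dots> \<le> qwidth Os" by (rule card_e_le_qwidth)
  finally show ?thesis .
qed

end
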